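(* Let $S$ be a semilattice. Then the normal dual $N^*\mathbb{L}(S)$ of $\mathbb{L}(S)$ is isomorphic to the normal category $\mathbb{R}(S)$, and the normal dual $N^*\mathbb{R}(S)$ of $\mathbb{R}(S)$ is isomorphic to the normal category $\mathbb{L}(S)$.
   Context: A semilattice is a commutative semigroup in which every element is idempotent. The category $\mathbb{L}(S)$ has objects $Se$, $e\in S$, morphisms $\rho(e,u,f)\colon Se\to Sf$, $x\mapsto xu$, $u\in eSf$, composed left to right; $\mathbb{R}(S)$ has objects $eS$, morphisms $\lambda(e,u,f)\colon eS\to fS$, $x\mapsto ux$, $u\in fSe$, with $\lambda(e,u,f)\lambda(f,v,h)=\lambda(e,vu,h)$. In either category, a normal cone with apex $c$ is a family $\gamma(a)\colon a\to c$ with (inclusion $a\to b$)$\gamma(b)=\gamma(a)$ whenever $a\subseteq b$ and some $\gamma(a)$ an isomorphism; the epimorphic component of $\rho(e,u,f)$ (resp. $\lambda(e,u,f)$) is $\rho(e,u,g)$ with $Sg=Su$ (resp. $\lambda(e,u,g)$ with $gS=uS$); the cones form a semigroup $T\mathbb{L}(S)$ (resp. $T\mathbb{R}(S)$) under $(\gamma\cdot\delta)(a)=\gamma(a)\,\delta(c_\gamma)^\circ$. For a cone $\gamma$ with apex $c$ and epimorphism $h\colon c\to c'$, $\gamma\ast h$ is $a\mapsto\gamma(a)h$. The normal dual $N^*\mathcal{C}$ of $\mathcal{C}\in\{\mathbb{L}(S),\mathbb{R}(S)\}$ is the category whose objects are the functors $H(\gamma;-)\colon\mathcal{C}\to\mathbf{Set}$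 for cones $\gamma$, with $H(\gamma;d)=\{\gamma\ast f^\circ : f\colon c_\gamma\to d\}$, $H(\gamma;g)\colon\gamma\ast f^\circ\mapsto\gamma\ast(fg)^\circ$, and whose morphisms are natural transformations; isomorphism is as normal categories. *)

theory Defs
  imports "HOL-Library.FuncSet"
begin

definition semilattice_on :: "'a set \<Rightarrow> ('a \<Rightarrow> 'a \<Rightarrow> 'a) \<Rightarrow> bool" where
  "semilattice_on S m \<longleftrightarrow>
     (\<forall>x\<in>S. \<forall>y\<in>S. m x y \<in> S) \<and>
     (\<forall>x\<in>S. \<forall>y\<in>S. \<forall>z\<in>S. m (m x y) z = m x (m y z)) \<and>
     (\<forall>x\<in>S. \<forall>y\<in>S. m x y = m y x) \<and>
     (\<forall>x\<in>S. m x x = x)"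

text \<open>Composition is written diagrammatically: cmp f g means first f, then g.
  sub a b is the subobject relation a \<subseteq> b and incl a b the inclusion a \<rightarrow> b.\<close>
record ('o, 'm) ncat =
  ob   :: "'o set"
  hom  :: "'o \<Rightarrow> 'o \<Rightarrow> 'm set"
  cmp  :: "'m \<Rightarrow> 'm \<Rightarrow> 'm"
  idm  :: "'o \<Rightarrow> 'm"
  sub  :: "'o \<Rightarrow> 'o \<Rightarrow> bool"
  incl :: "'o \<Rightarrow> 'o \<Rightarrow> 'm"

definition ncat_iso :: "('o, 'm, 'x) ncat_scheme \<Rightarrow> ('p, 'n, 'y) ncat_scheme \<Rightarrow> bool" where
  "ncat_iso C D \<longleftrightarrow> (\<exists>Fo Fm.
     bij_betw Fo (ob C) (ob D) \<and>
     (\<forall>a\<in>ob C. \<forall>b\<in>ob C. bij_betw Fm (hom C a b) (hom D (Fo a) (Fo b))) \<and>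
     (\<forall>a\<in>ob C. \<forall>b\<in>ob C. \<forall>c\<in>ob C. \<forall>f\<in>hom C a b. \<forall>g\<in>hom C b c.
        Fm (cmp C f g) = cmp D (Fm f) (Fm g)) \<and>
     (\<forall>a\<in>ob C. Fm (idm C a) = idm D (Fo a)) \<and>
     (\<forall>a\<in>ob C. \<forall>b\<in>ob C. sub C a b \<longleftrightarrow> sub D (Fo a) (Fo b)) \<and>
     (\<forall>a\<in>ob C. \<forall>b\<in>ob C. sub C a b \<longrightarrow> Fm (incl C a b) = incl D (Fo a) (Fo b)))"

text \<open>A morphism is a map together with its domain and codomain.\<close>
type_synonym 'a mor = "'a set \<times> ('a \<Rightarrow> 'a) \<times> 'a set"

definition mcomp :: "'a mor \<Rightarrow> 'a mor \<Rightarrow> 'a mor" where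
  "mcomp f g = (fst f, \<lambda>x\<in>fst f. fst (snd g) (fst (snd f) x), snd (snd g))"

definition midm :: "'a set \<Rightarrow> 'a mor" where
  "midm a = (a, \<lambda>x\<in>a. x, a)"

definition mincl :: "'a set \<Rightarrow> 'a set \<Rightarrow> 'a mor" where
  "mincl a b = (a, \<lambda>x\<in>a. x, b)"

definition lid :: "'a set \<Rightarrow> ('a \<Rightarrow> 'a \<Rightarrow> 'a) \<Rightarrow> 'a \<Rightarrow> 'a set" where
  "lid S m e = {m x e | x. x \<in> S}"

definition rid :: "'a set \<Rightarrow> ('a \<Rightarrow> 'a \<Rightarrow> 'a) \<Rightarrow> 'a \<Rightarrow> 'a set" where
  "rid S m e = {m e x | x. x \<in> S}"

definition mid :: "'a set \<Rightarrow> ('a \<Rightarrow> 'a \<Rightarrow> 'a) \<Rightarrow> 'a \<Rightarrow> 'a \<Rightarrow> 'a set" where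
  "mid S m e f = {m (m e x) f | x. x \<in> S}"

definition rho :: "'a set \<Rightarrow> ('a \<Rightarrow> 'a \<Rightarrow> 'a) \<Rightarrow> 'a \<Rightarrow> 'a \<Rightarrow> 'a \<Rightarrow> 'a mor" where
  "rho S m e u f = (lid S m e, \<lambda>x\<in>lid S m e. m x u, lid S m f)"

definition lam :: "'a set \<Rightarrow> ('a \<Rightarrow> 'a \<Rightarrow> 'a) \<Rightarrow> 'a \<Rightarrow> 'a \<Rightarrow> 'a \<Rightarrow> 'a mor" where
  "lam S m e u f = (rid S m e, \<lambda>x\<in>rid S m e. m u x, rid S m f)"

definition Lcat :: "'a set \<Rightarrow> ('a \<Rightarrow> 'a \<Rightarrow> 'a) \<Rightarrow> ('a set, 'a mor) ncat" where
  "Lcat S m = \<lparr> ob = {lid S m e | e. e \<in> S},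
     hom = (\<lambda>a b. {rho S m e u f | e u f. e \<in> S \<and> f \<in> S \<and> u \<in> mid S m e f
                                          \<and> a = lid S m e \<and> b = lid S m f}),
     cmp = mcomp, idm = midm, sub = (\<lambda>a b. a \<subseteq> b), incl = mincl \<rparr>"

definition Rcat :: "'a set \<Rightarrow> ('a \<Rightarrow> 'a \<Rightarrow> 'a) \<Rightarrow> ('a set, 'a mor) ncat" where
  "Rcat S m = \<lparr> ob = {rid S m e | e. e \<in> S},
     hom = (\<lambda>a b. {lam S m e u f | e u f. e \<in> S \<and> f \<in> S \<and> u \<in> mid S m f e
                                          \<and> a = rid S m e \<and> b = rid S m f}),
     cmp = mcomp, idm = midm, sub = (\<lambda>a b. a \<subseteq> b), incl = mincl \<rparr>"

text \<open>Epimorphic components: rho(e,u,f)\<degree> = rho(e,u,g) with Sg = Su;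
  lambda(e,u,f)\<degree> = lambda(e,u,g) with gS = uS.\<close>
definition Lepi :: "'a set \<Rightarrow> ('a \<Rightarrow> 'a \<Rightarrow> 'a) \<Rightarrow> 'a mor \<Rightarrow> 'a mor" where
  "Lepi S m r = (THE r'. \<exists>e u f g. e \<in> S \<and> u \<in> S \<and> f \<in> S \<and> g \<in> S \<and> u \<in> mid S m e f \<and>
       r = rho S m e u f \<and> lid S m g = lid S m u \<and> r' = rho S m e u g)"

definition Repi :: "'a set \<Rightarrow> ('a \<Rightarrow> 'a \<Rightarrow> 'a) \<Rightarrow> 'a mor \<Rightarrow> 'a mor" where
  "Repi S m r = (THE r'. \<exists>e u f g. e \<in> S \<and> u \<in> S \<and> f \<in> S \<and> g \<in> S \<and> u \<in> mid S m f e \<and>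
       r = lam S m e u f \<and> rid S m g = rid S m u \<and> r' = lam S m e u g)"

definition is_iso :: "('o, 'm, 'x) ncat_scheme \<Rightarrow> 'm \<Rightarrow> bool" where
  "is_iso C f \<longleftrightarrow> (\<exists>a\<in>ob C. \<exists>b\<in>ob C. \<exists>g. f \<in> hom C a b \<and> g \<in> hom C b a \<and>
                     cmp C f g = idm C a \<and> cmp C g f = idm C b)"

definition is_cone :: "('o, 'm, 'x) ncat_scheme \<Rightarrow> ('o \<Rightarrow> 'm) \<Rightarrow> 'o \<Rightarrow> bool" where
  "is_cone C \<gamma> c \<longleftrightarrow> c \<in> ob C \<and> (\<forall>a\<in>ob C. \<gamma> a \<in> hom C a c) \<and> \<gamma> \<in> extensional (ob C) \<and>
     (\<forall>a\<in>ob C. \<forall>b\<in>ob C. sub C a b \<longrightarrow> cmp C (incl C a b) (\<gamma> b) = \<gamma> a) \<and>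
     (\<exists>a\<in>ob C. is_iso C (\<gamma> a))"

definition cones :: "('o, 'm, 'x) ncat_scheme \<Rightarrow> ('o \<Rightarrow> 'm) set" where
  "cones C = {\<gamma>. \<exists>c. is_cone C \<gamma> c}"

definition apex :: "('o, 'm, 'x) ncat_scheme \<Rightarrow> ('o \<Rightarrow> 'm) \<Rightarrow> 'o" where
  "apex C \<gamma> = (THE c. is_cone C \<gamma> c)"

definition cstar :: "('o, 'm, 'x) ncat_scheme \<Rightarrow> ('o \<Rightarrow> 'm) \<Rightarrow> 'm \<Rightarrow> ('o \<Rightarrow> 'm)" where
  "cstar C \<gamma> h = (\<lambda>a\<in>ob C. cmp C (\<gamma> a) h)"

definition mors :: "('o, 'm, 'x) ncat_scheme \<Rightarrow> 'm set" where
  "mors C = (\<Union>a\<in>ob C. \<Union>b\<in>ob C. hom C a b)"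

definition Hset :: "('o, 'm, 'x) ncat_scheme \<Rightarrow> ('m \<Rightarrow> 'm) \<Rightarrow> ('o \<Rightarrow> 'm) \<Rightarrow> 'o \<Rightarrow> ('o \<Rightarrow> 'm) set" where
  "Hset C ep \<gamma> d = {cstar C \<gamma> (ep f) | f. f \<in> hom C (apex C \<gamma>) d}"

definition Hmap :: "('o, 'm, 'x) ncat_scheme \<Rightarrow> ('m \<Rightarrow> 'm) \<Rightarrow> ('o \<Rightarrow> 'm) \<Rightarrow> 'm
                    \<Rightarrow> ('o \<Rightarrow> 'm) \<Rightarrow> ('o \<Rightarrow> 'm)" where
  "Hmap C ep \<gamma> g =
     (\<lambda>\<delta>\<in>(\<Union>d\<in>ob C. \<Union>d'\<in>ob C. if g \<in> hom C d d' then Hset C ep \<gamma> d else {}).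
        THE \<delta>'. \<exists>d\<in>ob C. \<exists>d'\<in>ob C. \<exists>f. g \<in> hom C d d' \<and> f \<in> hom C (apex C \<gamma>) d \<and>
               \<delta> = cstar C \<gamma> (ep f) \<and> \<delta>' = cstar C \<gamma> (ep (cmp C f g)))"

text \<open>A set-valued functor on C: object part and morphism part (both extensional).\<close>
type_synonym ('o, 'm) hfun = "('o \<Rightarrow> ('o \<Rightarrow> 'm) set) \<times> ('m \<Rightarrow> ('o \<Rightarrow> 'm) \<Rightarrow> ('o \<Rightarrow> 'm))"

text \<open>A natural transformation: source functor, components, target functor.\<close>
type_synonym ('o, 'm) ntrans =
  "('o, 'm) hfun \<times> ('o \<Rightarrow> ('o \<Rightarrow> 'm) \<Rightarrow> ('o \<Rightarrow> 'm)) \<times> ('o, 'm) hfun"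

definition Hfun :: "('o, 'm, 'x) ncat_scheme \<Rightarrow> ('m \<Rightarrow> 'm) \<Rightarrow> ('o \<Rightarrow> 'm) \<Rightarrow> ('o, 'm) hfun" where
  "Hfun C ep \<gamma> = ((\<lambda>d\<in>ob C. Hset C ep \<gamma> d), (\<lambda>g\<in>mors C. Hmap C ep \<gamma> g))"

definition is_nt :: "('o, 'm, 'x) ncat_scheme \<Rightarrow> ('o, 'm) hfun \<Rightarrow> ('o, 'm) hfun
                     \<Rightarrow> ('o \<Rightarrow> ('o \<Rightarrow> 'm) \<Rightarrow> ('o \<Rightarrow> 'm)) \<Rightarrow> bool" where
  "is_nt C F G \<sigma> \<longleftrightarrow>
     \<sigma> \<in> extensional (ob C) \<and>
     (\<forall>d\<in>ob C. \<sigma> d \<in> fst F d \<rightarrow> fst G d \<and> \<sigma> d \<in> extensional (fst F d)) \<and>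
     (\<forall>d\<in>ob C. \<forall>d'\<in>ob C. \<forall>g\<in>hom C d d'. \<forall>x\<in>fst F d.
        snd G g (\<sigma> d x) = \<sigma> d' (snd F g x))"

definition ntcomp :: "('o, 'm, 'x) ncat_scheme \<Rightarrow> ('o, 'm) ntrans \<Rightarrow> ('o, 'm) ntrans \<Rightarrow> ('o, 'm) ntrans" where
  "ntcomp C s t = (fst s, (\<lambda>d\<in>ob C. \<lambda>x\<in>fst (fst s) d. fst (snd t) d (fst (snd s) d x)),
                   snd (snd t))"

definition Ndual :: "('o, 'm, 'x) ncat_scheme \<Rightarrow> ('m \<Rightarrow> 'm) \<Rightarrow> (('o, 'm) hfun, ('o, 'm) ntrans) ncat" where
  "Ndual C ep = \<lparr> ob = Hfun C ep ` cones C,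
     hom = (\<lambda>F G. {(F, \<sigma>, G) | \<sigma>. is_nt C F G \<sigma>}),
     cmp = ntcomp C,
     idm = (\<lambda>F. (F, (\<lambda>d\<in>ob C. \<lambda>x\<in>fst F d. x), F)),
     sub = (\<lambda>F G. \<forall>d\<in>ob C. fst F d \<subseteq> fst G d),
     incl = (\<lambda>F G. (F, (\<lambda>d\<in>ob C. \<lambda>x\<in>fst F d. x), G)) \<rparr>"

end

theory Submission
  imports Defs
begin

text \<open>In a semilattice \<open>eS = Se\<close> is the principal ideal of \<open>e\<close>, so \<open>\<R>(S)\<close> and \<open>\<L>(S)\<close>
  coincide and it suffices to show \<open>N*\<L>(S) \<cong> \<L>(S)\<close>. Every isomorphism of \<open>\<L>(S)\<close> is an
  identity, and restricting a cone with apex \<open>Sc\<close> to \<open>S(ec)\<close> through \<open>Sc\<close> and through \<open>Se\<close>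
  shows that its component at \<open>Se\<close> is \<open>\<rho>(e,ec,c)\<close>: the only normal cones are the principal
  cones \<open>x \<mapsto> xc\<close>. Hence \<open>H(c;Sf)\<close> is in bijection with \<open>cSf\<close>, with \<open>H(c;\<rho>(f,v,f'))\<close>
  acting by right multiplication by \<open>v\<close>, and by the Yoneda argument the natural transformations
  \<open>H(c;-) \<Rightarrow> H(c';-)\<close> are right multiplications by elements of \<open>cSc'\<close>. Sending \<open>H(c;-)\<close> to
  \<open>Sc\<close> is therefore an isomorphism of normal categories.\<close>

locale semilattice_set =
  fixes S :: "'a set" and m :: "'a \<Rightarrow> 'a \<Rightarrow> 'a" (infixl \<open>\<cdot>\<close> 70)
  assumes semilattice: "semilattice_on S m"
begin

lemma mult_closed [simp]: "x \<in> S \<Longrightarrow> y \<in> S \<Longrightarrow> x \<cdot> y \<in> S"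
  and mult_assoc [simp]: "x \<in> S \<Longrightarrow> y \<in> S \<Longrightarrow> z \<in> S \<Longrightarrow> x \<cdot> y \<cdot> z = x \<cdot> (y \<cdot> z)"
  and mult_commute: "x \<in> S \<Longrightarrow> y \<in> S \<Longrightarrow> x \<cdot> y = y \<cdot> x"
  and mult_idem [simp]: "x \<in> S \<Longrightarrow> x \<cdot> x = x"
  using semilattice unfolding semilattice_on_def by blast+

lemma mult_left_commute: "x \<in> S \<Longrightarrow> y \<in> S \<Longrightarrow> z \<in> S \<Longrightarrow> x \<cdot> (y \<cdot> z) = y \<cdot> (x \<cdot> z)"
  by (metis mult_assoc mult_commute)

lemma mult_left_idem [simp]: "x \<in> S \<Longrightarrow> y \<in> S \<Longrightarrow> x \<cdot> (x \<cdot> y) = x \<cdot> y"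
  by (metis mult_assoc mult_idem)

lemma lid_eq: "e \<in> S \<Longrightarrow> lid S m e = {x \<in> S. x \<cdot> e = x}"
  unfolding lid_def by (auto simp: mult_assoc) (metis mult_idem)

lemma rid_eq_lid: "e \<in> S \<Longrightarrow> rid S m e = lid S m e"
  unfolding lid_def rid_def by (metis mult_commute)

lemma mid_eq:
  assumes "e \<in> S" "f \<in> S" shows "mid S m e f = {u \<in> S. u \<cdot> e = u \<and> u \<cdot> f = u}"
proof (intro set_eqI iffI)
  fix u assume "u \<in> mid S m e f"
  then obtain x where x: "x \<in> S" and u: "u = e \<cdot> x \<cdot> f" unfolding mid_def by blast
  have "u \<cdot> e = u" "u \<cdot> f = u" unfolding u using assms x by (simp_all add: mult_commute mult_left_commute)
  with assms x show "u \<in> {u \<in> S. u \<cdot> e = u \<and> u \<cdot> f = u}" unfolding u by simp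
next
  fix u assume u: "u \<in> {u \<in> S. u \<cdot> e = u \<and> u \<cdot> f = u}"
  then have "e \<cdot> u = u" using assms mult_commute[of e u] by simp
  with u have "u = e \<cdot> u \<cdot> f" by simp
  with u show "u \<in> mid S m e f" unfolding mid_def by blast
qed

lemma mid_commute: "e \<in> S \<Longrightarrow> f \<in> S \<Longrightarrow> mid S m f e = mid S m e f"
  by (auto simp: mid_eq)

lemma mid_subset: "e \<in> S \<Longrightarrow> f \<in> S \<Longrightarrow> mid S m e f \<subseteq> S"
  by (auto simp: mid_eq)

lemma mem_mid_selfI: "e \<in> S \<Longrightarrow> f \<in> S \<Longrightarrow> e \<cdot> f = e \<Longrightarrow> e \<in> mid S m e f"
  by (simp add: mid_eq)

lemma mult_mem_mid: "e \<in> S \<Longrightarrow> f \<in> S \<Longrightarrow> e \<cdot> f \<in> mid S m e f"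
  by (simp add: mid_eq mult_commute mult_left_commute)

lemma mult_mem_mid_trans:
  assumes "e \<in> S" "f \<in> S" "g \<in> S" "u \<in> mid S m e f" "v \<in> mid S m f g"
  shows "u \<cdot> v \<in> mid S m e g"
proof -
  have u: "u \<in> S" "u \<cdot> e = u" and v: "v \<in> S" "v \<cdot> g = v"
    using assms by (simp_all add: mid_eq)
  have "u \<cdot> v \<cdot> e = u \<cdot> e \<cdot> v" "u \<cdot> v \<cdot> g = u \<cdot> (v \<cdot> g)"
    using u(1) v(1) assms by (simp_all add: mult_commute mult_left_commute)
  with u v assms show ?thesis by (simp add: mid_eq)
qed

lemma mult_mem_mid_shift:
  "c \<in> S \<Longrightarrow> c' \<in> S \<Longrightarrow> f \<in> S \<Longrightarrow> u \<in> mid S m c f \<Longrightarrow> w \<in> mid S m c c' \<Longrightarrow> u \<cdot> w \<in> mid S m c' f"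
  using mult_mem_mid_trans[of f c c' u w] mid_commute[of c f] mid_commute[of c' f] by simp

lemma mem_lid_self: "e \<in> S \<Longrightarrow> e \<in> lid S m e"
  by (simp add: lid_eq)

lemma lid_subset_iff: "e \<in> S \<Longrightarrow> f \<in> S \<Longrightarrow> lid S m e \<subseteq> lid S m f \<longleftrightarrow> e \<cdot> f = e"
  by (auto simp: lid_eq) (metis mult_assoc)

lemma lid_inject: "e \<in> S \<Longrightarrow> f \<in> S \<Longrightarrow> lid S m e = lid S m f \<longleftrightarrow> e = f"
  by (metis lid_subset_iff mult_commute subset_antisym order_refl)

lemma rho_inject:
  assumes "e \<in> S" "f \<in> S" "e' \<in> S" "f' \<in> S" "u \<in> mid S m e f" "u' \<in> mid S m e' f'"
  shows "rho S m e u f = rho S m e' u' f' \<longleftrightarrow> e = e' \<and> u = u' \<and> f = f'"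
proof
  assume eq: "rho S m e u f = rho S m e' u' f'"
  then have "e = e'" "f = f'"
    using assms lid_inject unfolding rho_def by auto
  moreover from eq this have "(\<lambda>x\<in>lid S m e. x \<cdot> u) e = (\<lambda>x\<in>lid S m e. x \<cdot> u') e"
    unfolding rho_def by simp
  then have "e \<cdot> u = e \<cdot> u'"
    using mem_lid_self assms(1) by simp
  moreover have "e \<cdot> u = u" "e' \<cdot> u' = u'"
    using assms mult_commute by (auto simp: mid_eq)
  ultimately show "e = e' \<and> u = u' \<and> f = f'" by simp
qed simp

lemma lam_eq_rho: "e \<in> S \<Longrightarrow> u \<in> S \<Longrightarrow> f \<in> S \<Longrightarrow> lam S m e u f = rho S m e u f"
  unfolding lam_def rho_def by (auto simp: rid_eq_lid lid_eq intro!: restrict_ext mult_commute)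

lemma Rcat_eq_Lcat: "Rcat S m = Lcat S m"
proof -
  have "{rid S m e |e. e \<in> S} = {lid S m e |e. e \<in> S}"
    by (metis rid_eq_lid)
  moreover have "{lam S m e u f |e u f. e \<in> S \<and> f \<in> S \<and> u \<in> mid S m f e \<and> a = rid S m e \<and> b = rid S m f}
      = {rho S m e u f |e u f. e \<in> S \<and> f \<in> S \<and> u \<in> mid S m e f \<and> a = lid S m e \<and> b = lid S m f}"
    (is "?R = ?L") for a b
  proof (intro set_eqI iffI)
    fix r assume "r \<in> ?R"
    then obtain e u f where "e \<in> S" "f \<in> S" "u \<in> mid S m e f" "a = lid S m e" "b = lid S m f"
        "r = rho S m e u f"
      using rid_eq_lid mid_commute mid_subset lam_eq_rho by (smt (verit) mem_Collect_eq subsetD)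
    then show "r \<in> ?L" by blast
  next
    fix r assume "r \<in> ?L"
    then obtain e u f where "e \<in> S" "f \<in> S" "u \<in> mid S m f e" "a = rid S m e" "b = rid S m f"
        "r = lam S m e u f"
      using rid_eq_lid mid_commute mid_subset lam_eq_rho by (smt (verit) mem_Collect_eq subsetD)
    then show "r \<in> ?R" by blast
  qed
  ultimately show ?thesis
    unfolding Rcat_def Lcat_def by simp
qed

lemma Repi_eq_Lepi: "Repi S m = Lepi S m"
proof
  fix r
  have "(\<exists>e u f g. e \<in> S \<and> u \<in> S \<and> f \<in> S \<and> g \<in> S \<and> u \<in> mid S m f e \<and>
          r = lam S m e u f \<and> rid S m g = rid S m u \<and> r' = lam S m e u g) \<longleftrightarrow>
        (\<exists>e u f g. e \<in> S \<and> u \<in> S \<and> f \<in> S \<and> g \<in> S \<and> u \<in> mid S m e f \<and>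
          r = rho S m e u f \<and> lid S m g = lid S m u \<and> r' = rho S m e u g)" for r'
    by (auto simp: rid_eq_lid lam_eq_rho mid_commute) (metis rid_eq_lid lam_eq_rho mid_commute)+
  then show "Repi S m r = Lepi S m r"
    unfolding Repi_def Lepi_def by simp
qed

abbreviation L where "L \<equiv> Lcat S m"

lemma ob_Lcat: "ob L = lid S m ` S"
  by (auto simp: Lcat_def)

lemma Lcat_simps [simp]:
  "cmp L = mcomp" "idm L = midm" "sub L = (\<subseteq>)" "incl L = mincl"
  by (simp_all add: Lcat_def)

lemma hom_Lcat_lid:
  assumes "e \<in> S" "f \<in> S"
  shows "hom L (lid S m e) (lid S m f) = (\<lambda>u. rho S m e u f) ` mid S m e f"
  using assms by (auto simp: Lcat_def lid_inject)

lemma rho_in_hom: "e \<in> S \<Longrightarrow> f \<in> S \<Longrightarrow> u \<in> mid S m e f \<Longrightarrow> rho S m e u f \<in> hom L (lid S m e) (lid S m f)"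
  by (simp add: hom_Lcat_lid)

lemma hom_LcatE:
  assumes "h \<in> hom L a b"
  obtains e f u where "e \<in> S" "f \<in> S" "u \<in> mid S m e f" "a = lid S m e" "b = lid S m f"
    "h = rho S m e u f"
  using assms by (auto simp: Lcat_def)

lemma mcomp_rho:
  assumes "e \<in> S" "f \<in> S" "g \<in> S" "u \<in> mid S m e f" "v \<in> mid S m f g"
  shows "mcomp (rho S m e u f) (rho S m f v g) = rho S m e (u \<cdot> v) g"
proof -
  have u: "u \<in> S" "u \<cdot> f = u" and v: "v \<in> S"
    using assms by (simp_all add: mid_eq)
  have "x \<cdot> u \<in> lid S m f" if "x \<in> S" for x
    using that u assms by (simp add: lid_eq)
  then show ?thesis
    using u v assms unfolding mcomp_def rho_def by (auto simp: lid_eq intro!: restrict_ext)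
qed

lemma midm_lid: "e \<in> S \<Longrightarrow> midm (lid S m e) = rho S m e e e"
  unfolding midm_def rho_def by (auto simp: lid_eq intro!: restrict_ext)

lemma mincl_lid: "e \<in> S \<Longrightarrow> f \<in> S \<Longrightarrow> mincl (lid S m e) (lid S m f) = rho S m e e f"
  unfolding mincl_def rho_def by (auto simp: lid_eq intro!: restrict_ext)

lemma is_iso_rho_imp_id:
  assumes e: "e \<in> S" and f: "f \<in> S" and u: "u \<in> mid S m e f" and iso: "is_iso L (rho S m e u f)"
  shows "f = e \<and> u = e"
proof -
  obtain a b g where ab: "a \<in> ob L" "b \<in> ob L" "rho S m e u f \<in> hom L a b" "g \<in> hom L b a"
    and inv: "mcomp (rho S m e u f) g = midm a" "mcomp g (rho S m e u f) = midm b"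
    using iso unfolding is_iso_def by auto
  from ab(3) have a: "a = lid S m e" and b: "b = lid S m f"
    by (auto elim!: hom_LcatE simp: rho_inject e f u)
  obtain v where v: "v \<in> mid S m f e" "g = rho S m f v e"
    using ab(4) e f by (auto simp: a b hom_Lcat_lid)
  have "rho S m e (u \<cdot> v) e = rho S m e e e" "rho S m f (v \<cdot> u) f = rho S m f f f"
    using inv e f u v by (simp_all add: a b mcomp_rho midm_lid)
  then have uv: "u \<cdot> v = e" and vu: "v \<cdot> u = f"
    using e f u v by (simp_all add: rho_inject mult_mem_mid_trans mem_mid_selfI)
  have uS: "u \<in> S" "u \<cdot> e = u" and vS: "v \<in> S"
    using u v e f by (simp_all add: mid_eq)
  have "f = e"
    using uv vu mult_commute[OF uS(1) vS] by simp
  moreover have "u = e"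
    using uv uS vS by (metis mult_left_idem)
  ultimately show ?thesis ..
qed

definition pcone :: "'a \<Rightarrow> 'a set \<Rightarrow> 'a mor" where
  "pcone c = (\<lambda>a\<in>ob L. (a, \<lambda>x\<in>a. x \<cdot> c, lid S m c))"

lemma pcone_lid: "e \<in> S \<Longrightarrow> c \<in> S \<Longrightarrow> pcone c (lid S m e) = rho S m e (e \<cdot> c) c"
  unfolding pcone_def rho_def by (auto simp: ob_Lcat lid_eq intro!: restrict_ext simp flip: mult_assoc)

lemma pcone_inject: "c \<in> S \<Longrightarrow> c' \<in> S \<Longrightarrow> pcone c = pcone c' \<longleftrightarrow> c = c'"
  by (metis mult_idem mult_mem_mid mem_mid_selfI pcone_lid rho_inject)

lemma is_cone_pcone: assumes c: "c \<in> S" shows "is_cone L (pcone c) (lid S m c)"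
  unfolding is_cone_def
proof (intro conjI ballI impI)
  show "lid S m c \<in> ob L" "pcone c \<in> extensional (ob L)"
    using c by (simp_all add: ob_Lcat pcone_def)
  show "pcone c a \<in> hom L a (lid S m c)" if "a \<in> ob L" for a
    using that c by (auto simp: ob_Lcat pcone_lid rho_in_hom mult_mem_mid)
  show "cmp L (incl L a b) (pcone c b) = pcone c a" if ab: "a \<in> ob L" "b \<in> ob L" "sub L a b" for a b
  proof -
    obtain e f where ef: "e \<in> S" "f \<in> S" "a = lid S m e" "b = lid S m f"
      using ab(1,2) by (auto simp: ob_Lcat)
    then have "e \<cdot> f = e"
      using ab(3) lid_subset_iff by simp
    then have "mcomp (rho S m e e f) (rho S m f (f \<cdot> c) c) = rho S m e (e \<cdot> c) c"
      using ef c by (simp add: mcomp_rho mem_mid_selfI mult_mem_mid flip: mult_assoc)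
    then show ?thesis
      using ef c by (simp add: mincl_lid pcone_lid)
  qed
  have "is_iso L (rho S m c c c)"
    unfolding is_iso_def using c
    by (intro bexI[of _ "lid S m c"] exI[of _ "rho S m c c c"])
      (simp_all add: ob_Lcat rho_in_hom mem_mid_selfI mcomp_rho midm_lid)
  then show "\<exists>a\<in>ob L. is_iso L (pcone c a)"
    using c by (metis imageI mult_idem ob_Lcat pcone_lid)
qed

lemma cone_component:
  assumes cone: "is_cone L \<gamma> (lid S m c)" and c: "c \<in> S" and e: "e \<in> S"
  shows "\<gamma> (lid S m e) = rho S m e (e \<cdot> c) c"
proof -
  have component: "\<exists>u\<in>mid S m e c. \<gamma> (lid S m e) = rho S m e u c" if "e \<in> S" for e
    using cone that c unfolding is_cone_def by (auto simp: ob_Lcat hom_Lcat_lid)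
  have compat: "mcomp (mincl a b) (\<gamma> b) = \<gamma> a" if "a \<in> ob L" "b \<in> ob L" "a \<subseteq> b" for a b
    using cone that unfolding is_cone_def by simp
  have at_apex: "\<gamma> (lid S m c) = rho S m c c c"
  proof -
    obtain e0 where e0: "e0 \<in> S" "is_iso L (\<gamma> (lid S m e0))"
      using cone unfolding is_cone_def by (auto simp: ob_Lcat)
    then obtain u0 where "u0 \<in> mid S m e0 c" "\<gamma> (lid S m e0) = rho S m e0 u0 c"
      using component by blast
    with e0 c show ?thesis
      using is_iso_rho_imp_id by metis
  qed
  obtain u where u: "u \<in> mid S m e c" and \<gamma>e: "\<gamma> (lid S m e) = rho S m e u c"
    using component e by blast
  define d where "d = e \<cdot> c"
  have d: "d \<in> S" "d \<cdot> c = d" "d \<cdot> e = d"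
    using e c by (simp_all add: d_def mult_commute mult_left_commute)
  have "u \<in> S" "u \<cdot> e = u" "u \<cdot> c = u"
    using u e c by (simp_all add: mid_eq)
  then have du: "d \<cdot> u = u"
    using e c by (simp add: d_def mult_commute mult_left_commute)
  have "rho S m d d c = \<gamma> (lid S m d)"
    using compat[of "lid S m d" "lid S m c"] at_apex d c
    by (simp add: ob_Lcat lid_subset_iff mincl_lid mcomp_rho mem_mid_selfI)
  also have "\<dots> = rho S m d u c"
    using compat[of "lid S m d" "lid S m e"] \<gamma>e d e c u du
    by (simp add: ob_Lcat lid_subset_iff mincl_lid mcomp_rho mem_mid_selfI)
  finally have "rho S m d d c = rho S m d u c" .
  moreover have "u \<in> mid S m d c"
    using mult_mem_mid_trans[OF d(1) e c mem_mid_selfI[OF d(1) e d(3)] u] du by simp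
  ultimately have "u = d"
    using d c by (simp add: rho_inject mem_mid_selfI)
  with \<gamma>e show ?thesis
    by (simp add: d_def)
qed

lemma is_cone_imp_pcone:
  assumes cone: "is_cone L \<gamma> a"
  obtains c where "c \<in> S" "a = lid S m c" "\<gamma> = pcone c"
proof -
  obtain c where c: "c \<in> S" "a = lid S m c"
    using cone unfolding is_cone_def by (auto simp: ob_Lcat)
  have "\<gamma> = pcone c"
  proof (rule extensionalityI)
    show "\<gamma> \<in> extensional (ob L)" "pcone c \<in> extensional (ob L)"
      using cone unfolding is_cone_def pcone_def by simp_all
    show "\<gamma> b = pcone c b" if "b \<in> ob L" for b
      using that cone c cone_component pcone_lid by (auto simp: ob_Lcat)
  qed
  with c that show ?thesis by blast
qed

lemma cones_Lcat: "cones L = pcone ` S"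
  unfolding cones_def by (auto elim: is_cone_imp_pcone intro: is_cone_pcone)

lemma apex_pcone: "c \<in> S \<Longrightarrow> apex L (pcone c) = lid S m c"
  unfolding apex_def by (rule the_equality) (auto simp: pcone_inject elim: is_cone_imp_pcone intro: is_cone_pcone)

lemma Lepi_rho:
  assumes "c \<in> S" "f \<in> S" "u \<in> mid S m c f"
  shows "Lepi S m (rho S m c u f) = rho S m c u u"
  unfolding Lepi_def
proof (rule the_equality)
  show "\<exists>e u' f' g. e \<in> S \<and> u' \<in> S \<and> f' \<in> S \<and> g \<in> S \<and> u' \<in> mid S m e f' \<and>
      rho S m c u f = rho S m e u' f' \<and> lid S m g = lid S m u' \<and> rho S m c u u = rho S m e u' g"
    using assms mid_subset by blast
next
  fix r assume "\<exists>e u' f' g. e \<in> S \<and> u' \<in> S \<and> f' \<in> S \<and> g \<in> S \<and> u' \<in> mid S m e f' \<and>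
      rho S m c u f = rho S m e u' f' \<and> lid S m g = lid S m u' \<and> r = rho S m e u' g"
  with assms show "r = rho S m c u u"
    by (auto simp: rho_inject lid_inject)
qed

lemma cstar_pcone:
  assumes c: "c \<in> S" and u: "u \<in> S" "u \<cdot> c = u"
  shows "cstar L (pcone c) (rho S m c u u) = pcone u"
proof (rule extensionalityI)
  show "cstar L (pcone c) (rho S m c u u) \<in> extensional (ob L)" "pcone u \<in> extensional (ob L)"
    unfolding cstar_def pcone_def by simp_all
  have "u \<in> mid S m c u" "c \<cdot> u = u"
    using c u by (simp_all add: mid_eq mult_commute)
  then have "mcomp (rho S m e (e \<cdot> c) c) (rho S m c u u) = rho S m e (e \<cdot> u) u" if "e \<in> S" for e
    using mcomp_rho[OF that c u(1) mult_mem_mid[OF that c]] that c u by simp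
  then show "cstar L (pcone c) (rho S m c u u) a = pcone u a" if "a \<in> ob L" for a
    using that c u by (auto simp: cstar_def ob_Lcat pcone_lid)
qed

lemma cstar_pcone_Lepi:
  "c \<in> S \<Longrightarrow> f \<in> S \<Longrightarrow> u \<in> mid S m c f \<Longrightarrow> cstar L (pcone c) (Lepi S m (rho S m c u f)) = pcone u"
  by (simp add: Lepi_rho cstar_pcone mid_eq)

abbreviation H where "H c \<equiv> Hfun L (Lepi S m) (pcone c)"

lemma Hset_pcone:
  assumes c: "c \<in> S" and f: "f \<in> S"
  shows "Hset L (Lepi S m) (pcone c) (lid S m f) = pcone ` mid S m c f"
proof -
  have "Hset L (Lepi S m) (pcone c) (lid S m f)
      = (\<lambda>h. cstar L (pcone c) (Lepi S m h)) ` hom L (lid S m c) (lid S m f)"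
    unfolding Hset_def apex_pcone[OF c] by blast
  also have "\<dots> = pcone ` mid S m c f"
    using c f by (simp add: hom_Lcat_lid image_image cstar_pcone_Lepi cong: image_cong)
  finally show ?thesis .
qed

lemma Hmap_pcone:
  assumes c: "c \<in> S" and f: "f \<in> S" and f': "f' \<in> S" and v: "v \<in> mid S m f f'"
    and u: "u \<in> mid S m c f"
  shows "Hmap L (Lepi S m) (pcone c) (rho S m f v f') (pcone u) = pcone (u \<cdot> v)"
proof -
  let ?g = "rho S m f v f'"
  have g: "?g \<in> hom L (lid S m f) (lid S m f')"
    using f f' v by (rule rho_in_hom)
  have uv: "cstar L (pcone c) (Lepi S m (mcomp (rho S m c u f) ?g)) = pcone (u \<cdot> v)"
    using c f f' u v by (simp add: mcomp_rho mult_mem_mid_trans cstar_pcone_Lepi)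
  have "pcone u \<in> (\<Union>d\<in>ob L. \<Union>d'\<in>ob L. if ?g \<in> hom L d d' then Hset L (Lepi S m) (pcone c) d else {})"
    using g c f f' u by (force simp: ob_Lcat Hset_pcone)
  moreover have "(THE \<delta>'. \<exists>d\<in>ob L. \<exists>d'\<in>ob L. \<exists>h. ?g \<in> hom L d d' \<and> h \<in> hom L (apex L (pcone c)) d \<and>
      pcone u = cstar L (pcone c) (Lepi S m h) \<and> \<delta>' = cstar L (pcone c) (Lepi S m (cmp L h ?g)))
    = pcone (u \<cdot> v)"
  proof (rule the_equality)
    show "\<exists>d\<in>ob L. \<exists>d'\<in>ob L. \<exists>h. ?g \<in> hom L d d' \<and> h \<in> hom L (apex L (pcone c)) d \<and>
        pcone u = cstar L (pcone c) (Lepi S m h) \<and> pcone (u \<cdot> v) = cstar L (pcone c) (Lepi S m (cmp L h ?g))"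
      using g uv c f f' u by (intro bexI exI[of _ "rho S m c u f"])
        (auto simp: ob_Lcat apex_pcone rho_in_hom cstar_pcone_Lepi)
  next
    fix \<delta>' assume "\<exists>d\<in>ob L. \<exists>d'\<in>ob L. \<exists>h. ?g \<in> hom L d d' \<and> h \<in> hom L (apex L (pcone c)) d \<and>
        pcone u = cstar L (pcone c) (Lepi S m h) \<and> \<delta>' = cstar L (pcone c) (Lepi S m (cmp L h ?g))"
    then obtain d d' h where h: "?g \<in> hom L d d'" "h \<in> hom L (lid S m c) d"
      "pcone u = cstar L (pcone c) (Lepi S m h)" "\<delta>' = cstar L (pcone c) (Lepi S m (mcomp h ?g))"
      using c by (auto simp: apex_pcone)
    from h(1) have "d = lid S m f"
      using f f' v by (auto elim!: hom_LcatE simp: rho_inject)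
    then obtain u' where u': "u' \<in> mid S m c f" "h = rho S m c u' f"
      using h(2) c f by (auto simp: hom_Lcat_lid)
    have "u' = u"
      using h(3) u u' c f by (simp add: cstar_pcone_Lepi pcone_inject mid_eq)
    then show "\<delta>' = pcone (u \<cdot> v)"
      using h(4) u' uv by simp
  qed
  ultimately show ?thesis
    unfolding Hmap_def by simp
qed

lemma H_obj: "c \<in> S \<Longrightarrow> f \<in> S \<Longrightarrow> fst (H c) (lid S m f) = pcone ` mid S m c f"
  by (simp add: Hfun_def ob_Lcat Hset_pcone)

lemma H_mor:
  "c \<in> S \<Longrightarrow> f \<in> S \<Longrightarrow> f' \<in> S \<Longrightarrow> v \<in> mid S m f f' \<Longrightarrow> u \<in> mid S m c f \<Longrightarrow>
    snd (H c) (rho S m f v f') (pcone u) = pcone (u \<cdot> v)"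
  using rho_in_hom[of f f' v] by (auto simp: Hfun_def mors_def ob_Lcat Hmap_pcone)

lemma H_objE:
  assumes "c \<in> S" "d \<in> ob L" "x \<in> fst (H c) d"
  obtains f u where "f \<in> S" "d = lid S m f" "u \<in> mid S m c f" "x = pcone u"
  using assms by (auto simp: ob_Lcat H_obj)

definition mult_nt :: "'a \<Rightarrow> 'a \<Rightarrow> 'a set \<Rightarrow> ('a set \<Rightarrow> 'a mor) \<Rightarrow> ('a set \<Rightarrow> 'a mor)" where
  "mult_nt c w = (\<lambda>d\<in>ob L. \<lambda>x\<in>fst (H c) d. pcone (inv_into S pcone x \<cdot> w))"

lemma inv_into_pcone: "u \<in> S \<Longrightarrow> inv_into S pcone (pcone u) = u"
  by (simp add: inj_on_def pcone_inject)

lemma mult_nt_apply: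
  "c \<in> S \<Longrightarrow> f \<in> S \<Longrightarrow> u \<in> mid S m c f \<Longrightarrow> mult_nt c w (lid S m f) (pcone u) = pcone (u \<cdot> w)"
  by (simp add: mult_nt_def ob_Lcat H_obj inv_into_pcone mid_eq)

lemma is_nt_mult_nt:
  assumes c: "c \<in> S" and c': "c' \<in> S" and w: "w \<in> mid S m c c'"
  shows "is_nt L (H c) (H c') (mult_nt c w)"
  unfolding is_nt_def
proof (intro conjI ballI)
  show "mult_nt c w \<in> extensional (ob L)"
    by (simp add: mult_nt_def)
  show "mult_nt c w d \<in> extensional (fst (H c) d)" if "d \<in> ob L" for d
    using that by (simp add: mult_nt_def)
  show "mult_nt c w d \<in> fst (H c) d \<rightarrow> fst (H c') d" if d: "d \<in> ob L" for d
  proof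
    fix x assume "x \<in> fst (H c) d"
    with c d obtain f u where "f \<in> S" "d = lid S m f" "u \<in> mid S m c f" "x = pcone u"
      by (rule H_objE)
    with c c' show "mult_nt c w d x \<in> fst (H c') d"
      by (simp add: mult_nt_apply H_obj mult_mem_mid_shift w)
  qed
  fix d d' g x assume d: "d \<in> ob L" "d' \<in> ob L" and g: "g \<in> hom L d d'" and x: "x \<in> fst (H c) d"
  obtain f f' v where ff': "f \<in> S" "f' \<in> S" "v \<in> mid S m f f'" "d = lid S m f" "d' = lid S m f'"
    "g = rho S m f v f'"
    using g by (rule hom_LcatE)
  obtain u where u: "u \<in> mid S m c f" "x = pcone u"
    using x c ff' by (auto simp: H_obj)
  have "u \<in> S" "v \<in> S" "w \<in> S"
    using u(1) ff'(1,2,3) w c c' by (simp_all add: mid_eq)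
  then have "u \<cdot> w \<cdot> v = u \<cdot> v \<cdot> w"
    by (simp add: mult_commute mult_left_commute)
  then show "snd (H c') g (mult_nt c w d x) = mult_nt c w d' (snd (H c) g x)"
    using c c' ff' u w by (simp add: mult_nt_apply H_mor mult_mem_mid_shift mult_mem_mid_trans)
qed

text \<open>The Yoneda argument: \<open>\<sigma>\<close> is determined by its value \<open>pcone w\<close> at the identity
  element \<open>pcone c\<close> of \<open>H c (Sc)\<close>, since \<open>pcone u = H c (\<rho>(c,u,f)) (pcone c)\<close>.\<close>
lemma is_nt_imp_mult_nt:
  assumes c: "c \<in> S" and c': "c' \<in> S" and \<sigma>: "is_nt L (H c) (H c') \<sigma>"
  obtains w where "w \<in> mid S m c c'" "\<sigma> = mult_nt c w"
proof -
  have cc: "c \<in> mid S m c c"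
    using c by (simp add: mem_mid_selfI)
  then have id_mem: "pcone c \<in> fst (H c) (lid S m c)"
    using c by (simp add: H_obj)
  then have "\<sigma> (lid S m c) (pcone c) \<in> fst (H c') (lid S m c)"
    using \<sigma> c unfolding is_nt_def by (auto simp: ob_Lcat)
  then obtain w where w: "w \<in> mid S m c c'" "\<sigma> (lid S m c) (pcone c) = pcone w"
    using c c' mid_commute[of c' c] by (auto simp: H_obj)
  have at_pcone: "\<sigma> (lid S m f) (pcone u) = pcone (u \<cdot> w)" if f: "f \<in> S" and u: "u \<in> mid S m c f" for f u
  proof -
    have "snd (H c') (rho S m c u f) (\<sigma> (lid S m c) (pcone c))
        = \<sigma> (lid S m f) (snd (H c) (rho S m c u f) (pcone c))"
      using \<sigma> c f u id_mem unfolding is_nt_def by (simp add: ob_Lcat rho_in_hom)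
    moreover have "u \<in> S" "w \<in> S" "u \<cdot> c = u"
      using u w c c' f by (simp_all add: mid_eq)
    moreover from this have "c \<cdot> u = u"
      using c mult_commute[of c u] by simp
    moreover have "w \<in> mid S m c' c"
      using w(1) c c' mid_commute[of c' c] by simp
    ultimately show ?thesis
      using c c' f u w(2) cc by (simp add: H_mor mult_commute)
  qed
  have "\<sigma> d = mult_nt c w d" for d
  proof (cases "d \<in> ob L")
    case d: True
    show ?thesis
    proof (rule extensionalityI)
      show "\<sigma> d \<in> extensional (fst (H c) d)" "mult_nt c w d \<in> extensional (fst (H c) d)"
        using \<sigma> d unfolding is_nt_def mult_nt_def by simp_all
      fix x assume "x \<in> fst (H c) d"
      with c d obtain f u where "f \<in> S" "d = lid S m f" "u \<in> mid S m c f" "x = pcone u"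
        by (rule H_objE)
      then show "\<sigma> d x = mult_nt c w d x"
        using c by (simp add: at_pcone mult_nt_apply)
    qed
  next
    case False
    then show ?thesis
      using \<sigma> unfolding is_nt_def mult_nt_def by (simp add: extensional_def)
  qed
  with w that show ?thesis by blast
qed

abbreviation N where "N \<equiv> Ndual L (Lepi S m)"

lemma ob_Ndual: "ob N = H ` S"
  by (simp add: Ndual_def cones_Lcat image_image)

lemma Ndual_simps [simp]:
  "cmp N = ntcomp L"
  "idm N = (\<lambda>F. (F, (\<lambda>d\<in>ob L. \<lambda>x\<in>fst F d. x), F))"
  "sub N = (\<lambda>F G. \<forall>d\<in>ob L. fst F d \<subseteq> fst G d)"
  "incl N = (\<lambda>F G. (F, (\<lambda>d\<in>ob L. \<lambda>x\<in>fst F d. x), G))"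
  by (simp_all add: Ndual_def)

lemma hom_Ndual_H:
  assumes "c \<in> S" "c' \<in> S"
  shows "hom N (H c) (H c') = (\<lambda>w. (H c, mult_nt c w, H c')) ` mid S m c c'"
proof -
  have "is_nt L (H c) (H c') \<sigma> \<longleftrightarrow> (\<exists>w\<in>mid S m c c'. \<sigma> = mult_nt c w)" for \<sigma>
    using assms is_nt_mult_nt is_nt_imp_mult_nt by blast
  then show ?thesis
    by (auto simp: Ndual_def)
qed

lemma H_subfunctor_iff:
  assumes c: "c \<in> S" and c': "c' \<in> S"
  shows "(\<forall>d\<in>ob L. fst (H c) d \<subseteq> fst (H c') d) \<longleftrightarrow> c \<cdot> c' = c"
proof
  assume "\<forall>d\<in>ob L. fst (H c) d \<subseteq> fst (H c') d"
  then have "fst (H c) (lid S m c) \<subseteq> fst (H c') (lid S m c)"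
    using c by (simp add: ob_Lcat)
  moreover have "pcone c \<in> fst (H c) (lid S m c)"
    using c by (simp add: H_obj mem_mid_selfI)
  ultimately have "pcone c \<in> pcone ` mid S m c' c"
    using c c' by (auto simp: H_obj)
  then show "c \<cdot> c' = c"
    using c c' by (auto simp: pcone_inject mid_eq)
next
  assume cc': "c \<cdot> c' = c"
  have "mid S m c f \<subseteq> mid S m c' f" if "f \<in> S" for f
  proof
    fix u assume "u \<in> mid S m c f"
    then have "u \<in> S" "u \<cdot> c = u" "u \<cdot> f = u"
      using c that by (simp_all add: mid_eq)
    moreover from this have "u \<cdot> c' = u"
      using c c' cc' mult_assoc[of u c c'] by simp
    ultimately show "u \<in> mid S m c' f"
      using c' that by (simp add: mid_eq)
  qed
  then show "\<forall>d\<in>ob L. fst (H c) d \<subseteq> fst (H c') d"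
    using c c' by (auto simp: ob_Lcat H_obj)
qed

lemma H_inject: "c \<in> S \<Longrightarrow> c' \<in> S \<Longrightarrow> H c = H c' \<longleftrightarrow> c = c'"
proof
  assume "c \<in> S" "c' \<in> S" "H c = H c'"
  then have "c \<cdot> c' = c" "c' \<cdot> c = c'"
    using H_subfunctor_iff[of c c'] H_subfunctor_iff[of c' c] by simp_all
  with \<open>c \<in> S\<close> \<open>c' \<in> S\<close> show "c = c'"
    by (simp add: mult_commute)
qed simp

lemma ntcomp_mult_nt:
  assumes c: "c \<in> S" and c': "c' \<in> S" and c'': "c'' \<in> S"
    and w: "w \<in> mid S m c c'" and w': "w' \<in> mid S m c' c''"
  shows "ntcomp L (H c, mult_nt c w, H c') (H c', mult_nt c' w', H c'') = (H c, mult_nt c (w \<cdot> w'), H c'')"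
proof -
  have "mult_nt c' w' d (mult_nt c w d x) = mult_nt c (w \<cdot> w') d x"
    if d: "d \<in> ob L" and x: "x \<in> fst (H c) d" for d x
  proof -
    obtain f u where fu: "f \<in> S" "d = lid S m f" "u \<in> mid S m c f" "x = pcone u"
      using c d x by (rule H_objE)
    then have "u \<cdot> w \<in> mid S m c' f"
      using c c' w by (simp add: mult_mem_mid_shift)
    moreover have "u \<cdot> w \<cdot> w' = u \<cdot> (w \<cdot> w')"
      using fu(3) w w' c c' c'' fu(1) by (simp add: mid_eq)
    ultimately show ?thesis
      using fu c c' by (simp add: mult_nt_apply)
  qed
  then show ?thesis
    unfolding ntcomp_def mult_nt_def[of c "w \<cdot> w'"] by (auto intro!: restrict_ext)
qed

lemma mult_nt_self: "c \<in> S \<Longrightarrow> (\<lambda>d\<in>ob L. \<lambda>x\<in>fst (H c) d. x) = mult_nt c c"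
  unfolding mult_nt_def
proof (intro restrict_ext)
  fix d x assume "c \<in> S" "d \<in> ob L" "x \<in> fst (H c) d"
  then obtain f u where "f \<in> S" "u \<in> mid S m c f" "x = pcone u"
    by (rule H_objE)
  with \<open>c \<in> S\<close> show "x = pcone (inv_into S pcone x \<cdot> c)"
    by (simp add: inv_into_pcone mid_eq)
qed

definition dual_ob :: "('a set, 'a mor) hfun \<Rightarrow> 'a set" where
  "dual_ob F = lid S m (inv_into S H F)"

text \<open>A natural transformation \<open>H c \<Rightarrow> H c'\<close> is sent to \<open>\<rho>(c,w,c')\<close>, where \<open>pcone w\<close> is its
  value at \<open>pcone c\<close>.\<close>
definition dual_mor :: "('a set, 'a mor) ntrans \<Rightarrow> 'a mor" where
  "dual_mor T =
     (let c = inv_into S H (fst T); c' = inv_into S H (snd (snd T))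
      in rho S m c (inv_into S pcone (fst (snd T) (lid S m c) (pcone c))) c')"

lemma inv_into_H: "c \<in> S \<Longrightarrow> inv_into S H (H c) = c"
  by (rule inv_into_f_f) (auto intro: inj_onI simp: H_inject)

lemma dual_ob_H: "c \<in> S \<Longrightarrow> dual_ob (H c) = lid S m c"
  by (simp add: dual_ob_def inv_into_H)

lemma dual_mor_mult_nt:
  assumes c: "c \<in> S" and c': "c' \<in> S" and w: "w \<in> mid S m c c'"
  shows "dual_mor (H c, mult_nt c w, H c') = rho S m c w c'"
proof -
  have "w \<in> S" "w \<cdot> c = w"
    using w c c' by (simp_all add: mid_eq)
  moreover from this have "c \<cdot> w = w"
    using c mult_commute[of c w] by simp
  ultimately show ?thesis
    using c c' by (simp add: dual_mor_def inv_into_H mult_nt_apply mem_mid_selfI inv_into_pcone)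
qed

lemma bij_betw_dual_mor:
  assumes "c \<in> S" "c' \<in> S"
  shows "bij_betw dual_mor (hom N (H c) (H c')) (hom L (dual_ob (H c)) (dual_ob (H c')))"
proof -
  have "inj_on (\<lambda>w. rho S m c w c') (mid S m c c')"
    using assms by (auto intro: inj_onI simp: rho_inject)
  moreover have "hom N (H c) (H c') = (\<lambda>w. (H c, mult_nt c w, H c')) ` mid S m c c'"
    "hom L (dual_ob (H c)) (dual_ob (H c')) = (\<lambda>w. rho S m c w c') ` mid S m c c'"
    using assms by (simp_all add: hom_Ndual_H dual_ob_H hom_Lcat_lid)
  ultimately show ?thesis
    using assms by (auto simp: bij_betw_def inj_on_def dual_mor_mult_nt image_image cong: image_cong)
qed

theorem Ndual_Lcat_iso: "ncat_iso N L"
  unfolding ncat_iso_def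
proof (intro exI conjI ballI impI)
  show "bij_betw dual_ob (ob N) (ob L)"
    by (auto simp: bij_betw_def inj_on_def ob_Ndual ob_Lcat dual_ob_H lid_inject image_image)
  show "bij_betw dual_mor (hom N F G) (hom L (dual_ob F) (dual_ob G))" if "F \<in> ob N" "G \<in> ob N" for F G
    using that by (auto simp: ob_Ndual bij_betw_dual_mor)
  show "dual_mor (cmp N T T') = cmp L (dual_mor T) (dual_mor T')"
    if "F \<in> ob N" "G \<in> ob N" "K \<in> ob N" "T \<in> hom N F G" "T' \<in> hom N G K" for F G K T T'
    using that by (auto simp: ob_Ndual hom_Ndual_H ntcomp_mult_nt dual_mor_mult_nt mcomp_rho
        mult_mem_mid_trans)
  show "dual_mor (idm N F) = idm L (dual_ob F)" if "F \<in> ob N" for F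
    using that by (auto simp: ob_Ndual mult_nt_self dual_mor_mult_nt mem_mid_selfI dual_ob_H midm_lid)
  show "sub N F G \<longleftrightarrow> sub L (dual_ob F) (dual_ob G)" if "F \<in> ob N" "G \<in> ob N" for F G
  proof -
    from that obtain c c' where "c \<in> S" "c' \<in> S" "F = H c" "G = H c'"
      by (auto simp: ob_Ndual)
    then show ?thesis
      by (simp add: H_subfunctor_iff dual_ob_H lid_subset_iff)
  qed
  show "dual_mor (incl N F G) = incl L (dual_ob F) (dual_ob G)"
    if "F \<in> ob N" "G \<in> ob N" "sub N F G" for F G
  proof -
    from that obtain c c' where "c \<in> S" "c' \<in> S" "F = H c" "G = H c'" "c \<cdot> c' = c"
      by (auto simp: ob_Ndual H_subfunctor_iff)
    then show ?thesis
      by (simp add: mult_nt_self dual_mor_mult_nt mem_mid_selfI dual_ob_H mincl_lid)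
  qed
qed

end

theorem mainTheorem9:
  fixes S :: "'a set" and m :: "'a \<Rightarrow> 'a \<Rightarrow> 'a"
  assumes "semilattice_on S m"
  shows "ncat_iso (Ndual (Lcat S m) (Lepi S m)) (Rcat S m) \<and>
         ncat_iso (Ndual (Rcat S m) (Repi S m)) (Lcat S m)"
proof -
  interpret semilattice_set S m
    using assms by unfold_locales
  show ?thesis
    using Ndual_Lcat_iso by (simp add: Rcat_eq_Lcat Repi_eq_Lepi)
qed

end
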